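(* For objects $V,W$ of $\mathcal{E}_q^{deg}$, $$\mathrm{Hom}_{\mathcal{F}_{iso}}(iso_V,iso_W)\cong\begin{cases}\mathbb{F}_2[O(V)]&\text{if }W\cong V,\\0&\text{otherwise,}\end{cases}$$ where $O(V)$ is the group of isometries of $V$.
   Context: $\mathcal{E}$: all $\mathbb{F}_2$-vector spaces. $\mathcal{E}_q^{deg}$: objects finite-dimensional quadratic spaces over $\mathbb{F}_2$ (possibly degenerate), morphisms injective linear maps preserving quadratic forms. $\mathrm{Sp}(\mathcal{E}_q^{deg})$: same objects, morphisms spans $[V\leftarrow D\rightarrow W]$ up to iso of $D$, composed by pullback. $\mathcal{F}_{iso}=\mathrm{Func}(\mathrm{Sp}(\mathcal{E}_q^{deg}),\mathcal{E})$. $Q_V=\mathbb{F}_2[\mathrm{Hom}_{\mathrm{Sp}(\mathcal{E}_q^{deg})}(V,-)]$; $D F=(-)^*\circ F\circ tr^{op}$ with $tr[V\leftarrow X\rightarrow W]=[W\leftarrow X\rightarrow V]$; $a_V:Q_V\to DQ_V$ corresponds by Yoneda to the linear form on $\mathbb{F}_2[\mathrm{End}(V)]$ equal to $1$ on $\mathrm{Id}_V$ and $0$ on all other basis elements; the isotropic functor $iso_V$ is the image of $a_V$. *)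

theory Defs
  imports Main "HOL-Library.Z2"
begin

type_synonym vec = "nat \<Rightarrow> bit"

definition vecs :: "nat \<Rightarrow> vec set" where
  "vecs n = {v. \<forall>i\<ge>n. v i = 0}"

definition vzero :: vec where "vzero = (\<lambda>_. 0)"

definition vadd :: "vec \<Rightarrow> vec \<Rightarrow> vec" where
  "vadd x y = (\<lambda>i. x i + y i)"

text \<open>An object is a pair (n, q): the space F2^n with a quadratic form q
  (q is required to vanish outside F2^n, so that objects are determined extensionally).\<close>

type_synonym qspace = "nat \<times> (vec \<Rightarrow> bit)"

definition polar :: "(vec \<Rightarrow> bit) \<Rightarrow> vec \<Rightarrow> vec \<Rightarrow> bit" where
  "polar q x y = q (vadd x y) + q x + q y"

definition qobj :: "qspace \<Rightarrow> bool" where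
  "qobj X \<longleftrightarrow>
     (\<forall>x. x \<notin> vecs (fst X) \<longrightarrow> snd X x = 0) \<and>
     snd X vzero = 0 \<and>
     (\<forall>x\<in>vecs (fst X). \<forall>y\<in>vecs (fst X). \<forall>z\<in>vecs (fst X).
        polar (snd X) (vadd x y) z = polar (snd X) x z + polar (snd X) y z)"

definition lin_on :: "nat \<Rightarrow> (vec \<Rightarrow> vec) \<Rightarrow> bool" where
  "lin_on n f \<longleftrightarrow> (\<forall>x\<in>vecs n. \<forall>y\<in>vecs n. f (vadd x y) = vadd (f x) (f y))"

definition qisos :: "qspace \<Rightarrow> qspace \<Rightarrow> (vec \<Rightarrow> vec) set" where
  "qisos X Y = {\<sigma>. bij_betw \<sigma> (vecs (fst X)) (vecs (fst Y)) \<and> lin_on (fst X) \<sigma> \<and>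
      (\<forall>x\<in>vecs (fst X). snd Y (\<sigma> x) = snd X x) \<and>
      (\<forall>x. x \<notin> vecs (fst X) \<longrightarrow> \<sigma> x = vzero)}"

definition qiso :: "qspace \<Rightarrow> qspace \<Rightarrow> bool" where
  "qiso X Y \<longleftrightarrow> qisos X Y \<noteq> {}"

definition orth :: "qspace \<Rightarrow> (vec \<Rightarrow> vec) set" where
  "orth V = qisos V V"

text \<open>An isomorphism class of spans [X <- D -> Y] of injective isometries is encoded by the
  image of D in X (+) Y, i.e. a linear subspace R of X (+) Y which is the graph of an injective
  isometric linear map from a subspace of X to Y.  Composition by pullback is relational
  composition, transposition is the converse relation, identity is the diagonal.\<close>

definition sphom :: "qspace \<Rightarrow> qspace \<Rightarrow> (vec \<times> vec) set set" where
  "sphom X Y = {R. R \<subseteq> vecs (fst X) \<times> vecs (fst Y) \<and> (vzero, vzero) \<in> R \<and>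
      (\<forall>a b c d. (a, b) \<in> R \<longrightarrow> (c, d) \<in> R \<longrightarrow> (vadd a c, vadd b d) \<in> R) \<and>
      (\<forall>a b c. (a, b) \<in> R \<longrightarrow> (a, c) \<in> R \<longrightarrow> b = c) \<and>
      (\<forall>a b c. (a, c) \<in> R \<longrightarrow> (b, c) \<in> R \<longrightarrow> a = b) \<and>
      (\<forall>a b. (a, b) \<in> R \<longrightarrow> snd Y b = snd X a)}"

definition spid :: "qspace \<Rightarrow> (vec \<times> vec) set" where
  "spid V = Id_on (vecs (fst V))"

type_synonym dual_elt = "(vec \<times> vec) set \<Rightarrow> bit"
  \<comment> \<open>elements of DQ_V(X) = F2[Hom(V,X)]^*, as functions on the finite basis Hom(V,X)\<close>

definition dzero :: dual_elt where "dzero = (\<lambda>_. 0)"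

definition dadd :: "dual_elt \<Rightarrow> dual_elt \<Rightarrow> dual_elt" where
  "dadd \<xi> \<zeta> = (\<lambda>g. \<xi> g + \<zeta> g)"

definition aV :: "qspace \<Rightarrow> qspace \<Rightarrow> (vec \<times> vec) set \<Rightarrow> dual_elt" where
  "aV V X f = (\<lambda>g. if g \<in> sphom V X \<and> g O converse f = spid V then 1 else 0)"

text \<open>iso_V(X) = image of a_V(X) : F2[Hom(V,X)] -> DQ_V(X); an element of F2[Hom(V,X)]
  is a finite subset F of the basis.\<close>

definition isoV :: "qspace \<Rightarrow> qspace \<Rightarrow> dual_elt set" where
  "isoV V X = {(\<lambda>g. \<Sum>f\<in>F. aV V X f g) | F. F \<subseteq> sphom V X}"

definition dact :: "qspace \<Rightarrow> qspace \<Rightarrow> (vec \<times> vec) set \<Rightarrow> dual_elt \<Rightarrow> dual_elt" where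
  "dact V Y h \<xi> = (\<lambda>g'. if g' \<in> sphom V Y then \<xi> (g' O converse h) else 0)"

type_synonym nat_trans = "qspace \<Rightarrow> dual_elt \<Rightarrow> dual_elt"

definition NT :: "qspace \<Rightarrow> qspace \<Rightarrow> nat_trans set" where
  "NT V W = {\<eta>.
     (\<forall>X. qobj X \<longrightarrow>
        (\<forall>\<xi>\<in>isoV V X. \<eta> X \<xi> \<in> isoV W X) \<and>
        (\<forall>\<xi>\<in>isoV V X. \<forall>\<zeta>\<in>isoV V X. \<eta> X (dadd \<xi> \<zeta>) = dadd (\<eta> X \<xi>) (\<eta> X \<zeta>)) \<and>
        (\<forall>\<xi>. \<xi> \<notin> isoV V X \<longrightarrow> \<eta> X \<xi> = dzero)) \<and>
     (\<forall>X. \<not> qobj X \<longrightarrow> \<eta> X = (\<lambda>_. dzero)) \<and>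
     (\<forall>X Y h. qobj X \<longrightarrow> qobj Y \<longrightarrow> h \<in> sphom X Y \<longrightarrow>
        (\<forall>\<xi>\<in>isoV V X. \<eta> Y (dact V Y h \<xi>) = dact W Y h (\<eta> X \<xi>)))}"

definition ntzero :: nat_trans where "ntzero = (\<lambda>X \<xi>. dzero)"

definition ntadd :: "nat_trans \<Rightarrow> nat_trans \<Rightarrow> nat_trans" where
  "ntadd \<eta> \<theta> = (\<lambda>X \<xi>. dadd (\<eta> X \<xi>) (\<theta> X \<xi>))"

definition ntsmult :: "bit \<Rightarrow> nat_trans \<Rightarrow> nat_trans" where
  "ntsmult c \<eta> = (\<lambda>X \<xi> g. c * \<eta> X \<xi> g)"

section \<open>The group algebra F2[O(V)] (as a vector space: functions O(V) -> F2)\<close>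

definition group_alg :: "qspace \<Rightarrow> ((vec \<Rightarrow> vec) \<Rightarrow> bit) set" where
  "group_alg V = {c. \<forall>\<sigma>. \<sigma> \<notin> orth V \<longrightarrow> c \<sigma> = 0}"

end

theory Submission
  imports Defs
begin

text \<open>
  By the Yoneda lemma a natural transformation \<open>\<eta> : iso\<^sub>V \<Rightarrow> iso\<^sub>W\<close> is determined by the
  image \<open>d\<close> of \<open>a\<^sub>V(Id\<^sub>V)\<close>, and is then given by \<open>\<eta>\<^sub>X(\<xi>)(g) = \<Sum>\<^sub>k d(k) \<xi>(tr(k) \<circ> g)\<close>.
  Naturality forces \<open>d\<close> to be supported on the isomorphisms \<open>W \<rightarrow> V\<close>, and conversely this
  formula is natural for every such \<open>d\<close>. Hence \<open>Hom(iso\<^sub>V, iso\<^sub>W)\<close> is the space of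
  \<open>\<bbbF>\<^sub>2\<close>-valued functions on \<open>Iso(W, V)\<close>: this is \<open>\<bbbF>\<^sub>2[O(V)]\<close> once an isometry
  \<open>W \<cong> V\<close> is fixed, and \<open>0\<close> if there is none.
\<close>

declare add_bit_eq_xor [simp del] mult_bit_eq_and [simp del]

lemma bit_add_self [simp]: "(x::bit) + x = 0"
  by (cases x) auto

lemma vadd_self [simp]: "vadd x x = vzero"
  by (simp add: vadd_def vzero_def)

lemma vzero_in_vecs [simp]: "vzero \<in> vecs n"
  by (simp add: vecs_def vzero_def)

lemma vadd_in_vecs [simp]: "x \<in> vecs n \<Longrightarrow> y \<in> vecs n \<Longrightarrow> vadd x y \<in> vecs n"
  by (simp add: vecs_def vadd_def)

lemma finite_vecs: "finite (vecs n)"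
proof -
  have "(UNIV :: bit set) = {0, 1}"
    using bit_not_zero_iff by blast
  then have "finite (UNIV :: bit set)"
    by (metis finite.emptyI finite_insert)
  then have "finite {f :: vec. \<forall>i. (i \<in> {..<n} \<longrightarrow> f i \<in> UNIV) \<and> (i \<notin> {..<n} \<longrightarrow> f i = 0)}"
    by (intro finite_set_of_finite_funs) simp_all
  then show ?thesis
    by (simp add: vecs_def not_less)
qed

lemma lin_on_vzero: "lin_on n \<phi> \<Longrightarrow> \<phi> vzero = vzero"
  unfolding lin_on_def by (metis vadd_self vzero_in_vecs)

subsection \<open>Spans\<close>

lemma sphomI:
  assumes "R \<subseteq> vecs (fst X) \<times> vecs (fst Y)" "(vzero, vzero) \<in> R"
    "\<And>a b c d. (a, b) \<in> R \<Longrightarrow> (c, d) \<in> R \<Longrightarrow> (vadd a c, vadd b d) \<in> R"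
    "\<And>a b c. (a, b) \<in> R \<Longrightarrow> (a, c) \<in> R \<Longrightarrow> b = c"
    "\<And>a b c. (a, c) \<in> R \<Longrightarrow> (b, c) \<in> R \<Longrightarrow> a = b"
    "\<And>a b. (a, b) \<in> R \<Longrightarrow> snd Y b = snd X a"
  shows "R \<in> sphom X Y"
  using assms unfolding sphom_def by blast

lemma sphomD:
  assumes "R \<in> sphom X Y"
  shows "R \<subseteq> vecs (fst X) \<times> vecs (fst Y)" "(vzero, vzero) \<in> R"
    "\<And>a b c d. (a, b) \<in> R \<Longrightarrow> (c, d) \<in> R \<Longrightarrow> (vadd a c, vadd b d) \<in> R"
    "\<And>a b c. (a, b) \<in> R \<Longrightarrow> (a, c) \<in> R \<Longrightarrow> b = c"
    "\<And>a b c. (a, c) \<in> R \<Longrightarrow> (b, c) \<in> R \<Longrightarrow> a = b"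
    "\<And>a b. (a, b) \<in> R \<Longrightarrow> snd Y b = snd X a"
  using assms unfolding sphom_def by blast+

lemma finite_sphom: "finite (sphom X Y)"
proof (rule finite_subset)
  show "sphom X Y \<subseteq> Pow (vecs (fst X) \<times> vecs (fst Y))"
    by (auto simp: sphom_def)
qed (simp add: finite_vecs)

lemma relcomp_sphom:
  assumes R: "R \<in> sphom X Y" and S: "S \<in> sphom Y Z"
  shows "R O S \<in> sphom X Z"
proof (rule sphomI)
  note r = sphomD[OF R] and s = sphomD[OF S]
  show "R O S \<subseteq> vecs (fst X) \<times> vecs (fst Z)" "(vzero, vzero) \<in> R O S"
    using r(1,2) s(1,2) by blast+
  show "(vadd a c, vadd b d) \<in> R O S" if "(a, b) \<in> R O S" "(c, d) \<in> R O S" for a b c d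
  proof -
    from that obtain y y' where "(a, y) \<in> R" "(y, b) \<in> S" "(c, y') \<in> R" "(y', d) \<in> S"
      by blast
    then have "(vadd a c, vadd y y') \<in> R" "(vadd y y', vadd b d) \<in> S"
      using r(3) s(3) by blast+
    then show ?thesis
      by blast
  qed
  show "b = c" if "(a, b) \<in> R O S" "(a, c) \<in> R O S" for a b c
    using that r(4) s(4) by blast
  show "a = b" if "(a, c) \<in> R O S" "(b, c) \<in> R O S" for a b c
    using that r(5) s(5) by blast
  show "snd Z b = snd X a" if "(a, b) \<in> R O S" for a b
    using that r(6) s(6) by fastforce
qed

lemma converse_sphom: "R \<in> sphom X Y \<Longrightarrow> converse R \<in> sphom Y X"
  unfolding sphom_def by auto

lemma spid_sphom: "spid V \<in> sphom V V"
  unfolding sphom_def spid_def by auto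

lemma spid_relcomp: "R \<in> sphom X Y \<Longrightarrow> spid X O R = R"
  using sphomD(1)[of R X Y] by (auto simp: spid_def)

lemma Id_on_Range_sphom:
  assumes R: "R \<in> sphom X Y"
  shows "Id_on (Range R) \<in> sphom Y Y"
proof (rule sphomI)
  show "(vadd a c, vadd b d) \<in> Id_on (Range R)"
    if "(a, b) \<in> Id_on (Range R)" "(c, d) \<in> Id_on (Range R)" for a b c d
  proof -
    from that obtain x y where "(x, a) \<in> R" "(y, c) \<in> R" "b = a" "d = c"
      by blast
    then show ?thesis
      using sphomD(3)[OF R] by blast
  qed
qed (use sphomD(1,2)[OF R] in auto)

text \<open>Spans \<open>[V \<leftarrow> D \<rightarrow> X]\<close> whose left leg is an isomorphism (graphs of injective
  isometries \<open>V \<rightarrow> X\<close>), and those whose two legs are isomorphisms.\<close>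

definition sp_emb :: "qspace \<Rightarrow> qspace \<Rightarrow> (vec \<times> vec) set set" where
  "sp_emb V X = {f \<in> sphom V X. Domain f = vecs (fst V)}"

definition sp_iso :: "qspace \<Rightarrow> qspace \<Rightarrow> (vec \<times> vec) set set" where
  "sp_iso X Y = {k \<in> sp_emb X Y. Range k = vecs (fst Y)}"

lemma finite_sp_emb: "finite (sp_emb V X)"
  by (rule finite_subset[OF _ finite_sphom]) (auto simp: sp_emb_def)

lemma finite_sp_iso: "finite (sp_iso X Y)"
  by (rule finite_subset[OF _ finite_sp_emb]) (auto simp: sp_iso_def)

lemma relcomp_converse_eq_spid_iff:
  assumes f: "f \<in> sphom V X" and g: "g \<in> sphom V X"
  shows "g O converse f = spid V \<longleftrightarrow> g = f \<and> f \<in> sp_emb V X"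
proof
  assume gf: "g O converse f = spid V"
  have common: "\<exists>x. (v, x) \<in> g \<and> (v, x) \<in> f" if "v \<in> vecs (fst V)" for v
  proof -
    have "(v, v) \<in> g O converse f"
      using that gf by (simp add: spid_def Id_onI)
    then show ?thesis
      by blast
  qed
  have "(v, x) \<in> g \<longleftrightarrow> (v, x) \<in> f" for v x
  proof (cases "v \<in> vecs (fst V)")
    case True
    then obtain y where "(v, y) \<in> g" "(v, y) \<in> f"
      using common by blast
    then show ?thesis
      using sphomD(4)[OF f] sphomD(4)[OF g] by blast
  next
    case False
    then show ?thesis
      using sphomD(1)[OF f] sphomD(1)[OF g] by blast
  qed
  then have "g = f"
    by auto
  moreover have "Domain f = vecs (fst V)"
    using common sphomD(1)[OF f] by blast
  ultimately show "g = f \<and> f \<in> sp_emb V X"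
    using f by (auto simp: sp_emb_def)
next
  assume gf: "g = f \<and> f \<in> sp_emb V X"
  have "f O converse f \<subseteq> Id_on (Domain f)"
  proof
    fix p
    assume "p \<in> f O converse f"
    then obtain a b x where "p = (a, b)" "(a, x) \<in> f" "(b, x) \<in> f"
      by blast
    then show "p \<in> Id_on (Domain f)"
      using sphomD(5)[OF f] by blast
  qed
  moreover have "Id_on (Domain f) \<subseteq> f O converse f"
    by blast
  ultimately show "g O converse f = spid V"
    using gf by (simp add: sp_emb_def spid_def)
qed

lemma relcomp_sp_emb:
  assumes f: "f \<in> sp_emb X Y" and g: "g \<in> sp_emb Y Z"
  shows "f O g \<in> sp_emb X Z"
proof -
  have "Range f \<subseteq> vecs (fst Y)"
    using f sphomD(1)[of f X Y] by (auto simp: sp_emb_def)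
  then have "Range f \<subseteq> Domain g"
    using g by (simp add: sp_emb_def)
  then have "Domain (f O g) = Domain f"
    by blast
  then show ?thesis
    using f g relcomp_sphom[of f X Y g Z] by (auto simp: sp_emb_def)
qed

lemma converse_sp_iso: "k \<in> sp_iso X Y \<Longrightarrow> converse k \<in> sp_iso Y X"
  by (auto simp: sp_iso_def sp_emb_def converse_sphom)

lemma relcomp_sp_iso:
  assumes k: "k \<in> sp_iso X Y" and l: "l \<in> sp_iso Y Z"
  shows "k O l \<in> sp_iso X Z"
proof -
  have "converse l O converse k \<in> sp_emb Z X"
    using converse_sp_iso[OF k] converse_sp_iso[OF l] by (intro relcomp_sp_emb[where Y = Y]) (simp_all add: sp_iso_def)
  then have "Range (k O l) = vecs (fst Z)"
    by (simp add: sp_emb_def flip: converse_relcomp)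
  then show ?thesis
    using relcomp_sp_emb[of k X Y l Z] k l by (simp add: sp_iso_def)
qed

lemma sp_iso_relcomp_converse: "k \<in> sp_iso X Y \<Longrightarrow> k O converse k = spid X"
  using relcomp_converse_eq_spid_iff[of k X Y k] by (simp add: sp_iso_def sp_emb_def)

lemma sp_iso_converse_relcomp: "k \<in> sp_iso X Y \<Longrightarrow> converse k O k = spid Y"
  using sp_iso_relcomp_converse[OF converse_sp_iso] by simp


lemma spid_sp_emb: "spid V \<in> sp_emb V V"
  using spid_sphom by (simp add: sp_emb_def spid_def)

subsection \<open>The functor iso_V\<close>

definition indic :: "(vec \<times> vec) set set \<Rightarrow> dual_elt" where
  "indic S = (\<lambda>g. if g \<in> S then 1 else 0)"

lemma aV_eq_indic:
  assumes "f \<in> sphom V X"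
  shows "aV V X f = indic ({f} \<inter> sp_emb V X)"
  unfolding aV_def indic_def
  by (rule ext) (use relcomp_converse_eq_spid_iff[OF assms] assms in auto)

lemma isoV_eq: "isoV V X = {\<xi>. \<forall>g. g \<notin> sp_emb V X \<longrightarrow> \<xi> g = 0}"
proof (intro set_eqI iffI)
  fix \<xi> :: dual_elt
  assume "\<xi> \<in> isoV V X"
  then obtain F where F: "F \<subseteq> sphom V X" and \<xi>: "\<xi> = (\<lambda>g. \<Sum>f\<in>F. aV V X f g)"
    unfolding isoV_def by blast
  have "(\<Sum>f\<in>F. aV V X f g) = 0" if g: "g \<notin> sp_emb V X" for g
  proof (intro sum.neutral ballI)
    fix f
    assume "f \<in> F"
    then show "aV V X f g = 0"
      using F g by (auto simp: aV_eq_indic indic_def)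
  qed
  then show "\<xi> \<in> {\<xi>. \<forall>g. g \<notin> sp_emb V X \<longrightarrow> \<xi> g = 0}"
    by (simp add: \<xi>)
next
  fix \<xi> :: dual_elt
  assume "\<xi> \<in> {\<xi>. \<forall>g. g \<notin> sp_emb V X \<longrightarrow> \<xi> g = 0}"
  then have supp: "\<And>g. g \<notin> sp_emb V X \<Longrightarrow> \<xi> g = 0"
    by blast
  define F where "F = {f \<in> sp_emb V X. \<xi> f = 1}"
  have F: "finite F" "F \<subseteq> sphom V X"
    by (rule finite_subset[OF _ finite_sp_emb[of V X]]) (auto simp: F_def sp_emb_def)
  have "\<xi> g = (\<Sum>f\<in>F. aV V X f g)" for g
  proof -
    have "(\<Sum>f\<in>F. aV V X f g) = (\<Sum>f\<in>F. if f = g then 1 else 0)"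
    proof (rule sum.cong[OF refl])
      fix f
      assume "f \<in> F"
      then have "f \<in> sp_emb V X" "f \<in> sphom V X"
        by (auto simp: F_def sp_emb_def)
      then show "aV V X f g = (if f = g then 1 else 0)"
        by (auto simp: aV_eq_indic indic_def)
    qed
    also have "\<dots> = (if g \<in> F then 1 else 0)"
      using F(1) by (simp add: sum.delta')
    also have "\<dots> = \<xi> g"
      using supp[of g] by (auto simp: F_def)
    finally show ?thesis
      by simp
  qed
  then have "\<xi> = (\<lambda>g. \<Sum>f\<in>F. aV V X f g)"
    by (rule ext)
  then show "\<xi> \<in> isoV V X"
    unfolding isoV_def using F(2) by blast
qed

lemma dzero_isoV: "dzero \<in> isoV V X"
  by (simp add: isoV_eq dzero_def)

lemma dadd_isoV: "\<xi> \<in> isoV V X \<Longrightarrow> \<zeta> \<in> isoV V X \<Longrightarrow> dadd \<xi> \<zeta> \<in> isoV V X"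
  by (simp add: isoV_eq dadd_def)

lemma indic_isoV: "S \<subseteq> sp_emb V X \<Longrightarrow> indic S \<in> isoV V X"
  by (auto simp: isoV_eq indic_def)

definition iso_unit :: "qspace \<Rightarrow> dual_elt" where
  "iso_unit V = aV V V (spid V)"

lemma iso_unit_eq: "iso_unit V = indic {spid V}"
  using aV_eq_indic[OF spid_sphom] spid_sp_emb by (simp add: iso_unit_def)

lemma iso_unit_isoV: "iso_unit V \<in> isoV V V"
  by (simp add: iso_unit_eq indic_isoV spid_sp_emb)

lemma dact_isoV:
  assumes \<xi>: "\<xi> \<in> isoV V X" and h: "h \<in> sphom X Y"
  shows "dact V Y h \<xi> \<in> isoV V Y"
proof -
  have "g O converse h \<notin> sp_emb V X" if "g \<in> sphom V Y" "g \<notin> sp_emb V Y" for g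
  proof -
    have "Domain (g O converse h) \<subseteq> Domain g" "Domain g \<subseteq> vecs (fst V)"
      using sphomD(1)[OF that(1)] by blast+
    then show ?thesis
      using that by (auto simp: sp_emb_def)
  qed
  then show ?thesis
    using \<xi> by (auto simp: isoV_eq dact_def)
qed

lemma dact_iso_unit:
  assumes "h \<in> sphom V Y"
  shows "dact V Y h (iso_unit V) = indic ({h} \<inter> sp_emb V Y)"
  unfolding dact_def iso_unit_eq indic_def
  by (rule ext) (use relcomp_converse_eq_spid_iff[OF assms] assms in auto)

subsection \<open>Natural transformations\<close>

lemma NTD:
  assumes "\<eta> \<in> NT V W"
  shows "\<And>X \<xi>. qobj X \<Longrightarrow> \<xi> \<in> isoV V X \<Longrightarrow> \<eta> X \<xi> \<in> isoV W X"
    "\<And>X \<xi> \<zeta>. qobj X \<Longrightarrow> \<xi> \<in> isoV V X \<Longrightarrow> \<zeta> \<in> isoV V X \<Longrightarrow>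
      \<eta> X (dadd \<xi> \<zeta>) = dadd (\<eta> X \<xi>) (\<eta> X \<zeta>)"
    "\<And>X \<xi>. qobj X \<Longrightarrow> \<xi> \<notin> isoV V X \<Longrightarrow> \<eta> X \<xi> = dzero"
    "\<And>X. \<not> qobj X \<Longrightarrow> \<eta> X = (\<lambda>_. dzero)"
    "\<And>X Y h \<xi>. qobj X \<Longrightarrow> qobj Y \<Longrightarrow> h \<in> sphom X Y \<Longrightarrow> \<xi> \<in> isoV V X \<Longrightarrow>
      \<eta> Y (dact V Y h \<xi>) = dact W Y h (\<eta> X \<xi>)"
  using assms unfolding NT_def by blast+

lemma NT_dzero:
  assumes "\<eta> \<in> NT V W" "qobj X"
  shows "\<eta> X dzero = dzero"
proof -
  have "dadd dzero dzero = dzero"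
    by (simp add: dadd_def dzero_def)
  then have "\<eta> X dzero = dadd (\<eta> X dzero) (\<eta> X dzero)"
    using NTD(2)[OF assms dzero_isoV dzero_isoV] by simp
  then show ?thesis
    by (simp add: dadd_def dzero_def)
qed

lemma ntzero_NT: "ntzero \<in> NT V W"
  unfolding NT_def ntzero_def
  using dzero_isoV by (auto simp: dadd_def dzero_def dact_def)

lemma NT_eq_sum_dact:
  assumes qV: "qobj V" and qX: "qobj X" and \<eta>: "\<eta> \<in> NT V W" and \<xi>: "\<xi> \<in> isoV V X"
  shows "\<eta> X \<xi> = (\<lambda>g. \<Sum>f | \<xi> f = 1. dact W X f (\<eta> V (iso_unit V)) g)"
proof -
  let ?u = "\<eta> V (iso_unit V)"
  have "\<eta> X (indic S) = (\<lambda>g. \<Sum>f\<in>S. dact W X f ?u g)" if "finite S" "S \<subseteq> sp_emb V X" for S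
    using that
  proof (induction S rule: finite_induct)
    case empty
    then show ?case
      using NT_dzero[OF \<eta> qX] by (simp add: indic_def dzero_def)
  next
    case (insert f S)
    have f: "f \<in> sphom V X" "f \<in> sp_emb V X"
      using insert.prems by (auto simp: sp_emb_def)
    have "indic (insert f S) = dadd (indic {f}) (indic S)"
      using insert.hyps(2) by (auto simp: indic_def dadd_def)
    then have "\<eta> X (indic (insert f S)) = dadd (\<eta> X (indic {f})) (\<eta> X (indic S))"
      using NTD(2)[OF \<eta> qX] insert.prems indic_isoV by simp
    also have "\<eta> X (indic {f}) = dact W X f ?u"
      using NTD(5)[OF \<eta> qV qX f(1) iso_unit_isoV] dact_iso_unit[OF f(1)] f(2) by simp
    finally show ?case
      using insert by (simp add: dadd_def)
  qed
  moreover have "\<xi> = indic {f. \<xi> f = 1}"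
    by (rule ext) (simp add: indic_def)
  moreover have "{f. \<xi> f = 1} \<subseteq> sp_emb V X"
    using \<xi> by (auto simp: isoV_eq)
  moreover then have "finite {f. \<xi> f = 1}"
    using finite_sp_emb finite_subset by blast
  ultimately show ?thesis
    by metis
qed

lemma NT_eqI:
  assumes qV: "qobj V" and \<eta>: "\<eta> \<in> NT V W" and \<theta>: "\<theta> \<in> NT V W"
    and unit: "\<eta> V (iso_unit V) = \<theta> V (iso_unit V)"
  shows "\<eta> = \<theta>"
proof (rule ext, rule ext)
  fix X \<xi>
  show "\<eta> X \<xi> = \<theta> X \<xi>"
    using NT_eq_sum_dact[OF qV _ \<eta>] NT_eq_sum_dact[OF qV _ \<theta>] NTD(3,4)[OF \<eta>] NTD(3,4)[OF \<theta>] unit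
    by (cases "qobj X"; cases "\<xi> \<in> isoV V X") auto
qed

text \<open>Naturality along the idempotent \<open>Id\<close> on the range of \<open>k\<close> kills \<open>a\<^sub>V(Id\<^sub>V)\<close> unless
  \<open>k\<close> is onto, so only isomorphisms can carry the value of a natural transformation.\<close>

lemma NT_iso_unit_support:
  assumes qV: "qobj V" and \<eta>: "\<eta> \<in> NT V W" and k: "\<eta> V (iso_unit V) k \<noteq> 0"
  shows "k \<in> sp_iso W V"
proof -
  let ?u = "\<eta> V (iso_unit V)"
  have k_emb: "k \<in> sp_emb W V"
    using NTD(1)[OF \<eta> qV iso_unit_isoV] k by (auto simp: isoV_eq)
  then have ks: "k \<in> sphom W V"
    by (simp add: sp_emb_def)
  define h where "h = Id_on (Range k)"
  have h: "h \<in> sphom V V"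
    unfolding h_def using Id_on_Range_sphom[OF ks] .
  have "k O converse h = k"
    unfolding h_def by auto
  then have "?u k = dact W V h ?u k"
    using ks by (simp add: dact_def)
  also have "\<dots> = \<eta> V (indic ({h} \<inter> sp_emb V V)) k"
    using NTD(5)[OF \<eta> qV qV h iso_unit_isoV] dact_iso_unit[OF h] by simp
  finally have "h \<in> sp_emb V V"
    using k NT_dzero[OF \<eta> qV] by (cases "h \<in> sp_emb V V") (auto simp: indic_def dzero_def)
  then show ?thesis
    using k_emb by (simp add: sp_iso_def sp_emb_def h_def)
qed

definition nt_of :: "qspace \<Rightarrow> qspace \<Rightarrow> dual_elt \<Rightarrow> nat_trans" where
  "nt_of V W d = (\<lambda>X \<xi>. if qobj X \<and> \<xi> \<in> isoV V X
      then (\<lambda>g. if g \<in> sphom W X then \<Sum>k\<in>sp_iso W V. d k * \<xi> (converse k O g) else 0)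
      else dzero)"

lemma nt_of_isoV:
  assumes \<xi>: "\<xi> \<in> isoV V X"
  shows "nt_of V W d X \<xi> \<in> isoV W X"
proof -
  have "\<xi> (converse k O g) = 0" if k: "k \<in> sp_iso W V" and g: "g \<in> sphom W X" "g \<notin> sp_emb W X" for k g
  proof -
    have "k O (converse k O g) = g"
      using sp_iso_relcomp_converse[OF k] spid_relcomp[OF g(1)] by (simp flip: O_assoc)
    then have "converse k O g \<notin> sp_emb V X"
      using relcomp_sp_emb[of k W V "converse k O g" X] k g(2) by (auto simp: sp_iso_def)
    then show ?thesis
      using \<xi> by (simp add: isoV_eq)
  qed
  then show ?thesis
    by (auto simp: isoV_eq nt_of_def dzero_def)
qed

lemma nt_of_natural:
  assumes "qobj X" "qobj Y" and h: "h \<in> sphom X Y" and \<xi>: "\<xi> \<in> isoV V X"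
  shows "nt_of V W d Y (dact V Y h \<xi>) = dact W Y h (nt_of V W d X \<xi>)"
proof (rule ext)
  fix g
  show "nt_of V W d Y (dact V Y h \<xi>) g = dact W Y h (nt_of V W d X \<xi>) g"
  proof (cases "g \<in> sphom W Y")
    case True
    have "converse k O g \<in> sphom V Y" if "k \<in> sp_iso W V" for k
      using that by (intro relcomp_sphom[OF converse_sphom True]) (simp add: sp_iso_def sp_emb_def)
    moreover have "g O converse h \<in> sphom W X"
      by (rule relcomp_sphom[OF True converse_sphom[OF h]])
    ultimately show ?thesis
      using assms dact_isoV[OF \<xi> h] by (simp add: nt_of_def dact_def O_assoc)
  next
    case False
    then show ?thesis
      using assms dact_isoV[OF \<xi> h] by (simp add: nt_of_def dact_def dzero_def)
  qed
qed

lemma nt_of_NT: "nt_of V W d \<in> NT V W"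
proof -
  have "nt_of V W d X (dadd \<xi> \<zeta>) = dadd (nt_of V W d X \<xi>) (nt_of V W d X \<zeta>)"
    if "qobj X" "\<xi> \<in> isoV V X" "\<zeta> \<in> isoV V X" for X \<xi> \<zeta>
    using that dadd_isoV[OF that(2,3)]
    by (auto simp: nt_of_def dadd_def distrib_left sum.distrib)
  moreover have "nt_of V W d X \<xi> = dzero" if "\<xi> \<notin> isoV V X" for X \<xi>
    using that by (simp add: nt_of_def)
  moreover have "nt_of V W d X = (\<lambda>_. dzero)" if "\<not> qobj X" for X
    using that by (simp add: nt_of_def)
  ultimately show ?thesis
    unfolding NT_def using nt_of_isoV nt_of_natural by blast
qed

lemma nt_of_iso_unit:
  assumes qV: "qobj V" and d: "\<forall>k. k \<notin> sp_iso W V \<longrightarrow> d k = 0"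
  shows "nt_of V W d V (iso_unit V) = d"
proof
  fix k0
  show "nt_of V W d V (iso_unit V) k0 = d k0"
  proof (cases "k0 \<in> sphom W V")
    case True
    have "d k * iso_unit V (converse k O k0) = (if k = k0 then d k else 0)"
      if k: "k \<in> sp_iso W V" for k
    proof -
      have "converse k \<in> sphom V W" "converse k0 \<in> sphom V W" "converse k \<in> sp_emb V W"
        using converse_sp_iso[OF k] converse_sphom[OF True] by (simp_all add: sp_iso_def sp_emb_def)
      then show ?thesis
        using relcomp_converse_eq_spid_iff[of "converse k0" V W "converse k"]
        by (auto simp: iso_unit_eq indic_def)
    qed
    then have "nt_of V W d V (iso_unit V) k0 = (\<Sum>k\<in>sp_iso W V. if k = k0 then d k else 0)"
      using qV True iso_unit_isoV by (simp add: nt_of_def)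
    also have "\<dots> = d k0"
      using d finite_sp_iso by (simp add: sum.delta)
    finally show ?thesis .
  next
    case False
    then show ?thesis
      using qV d iso_unit_isoV by (auto simp: nt_of_def sp_iso_def sp_emb_def)
  qed
qed

lemma bij_betw_NT_iso_unit:
  assumes "qobj V"
  shows "bij_betw (\<lambda>\<eta>. \<eta> V (iso_unit V)) (NT V W) {d. \<forall>k. k \<notin> sp_iso W V \<longrightarrow> d k = 0}"
proof (rule bij_betw_imageI)
  show "inj_on (\<lambda>\<eta>. \<eta> V (iso_unit V)) (NT V W)"
    by (rule inj_onI) (rule NT_eqI[OF assms])
  show "(\<lambda>\<eta>. \<eta> V (iso_unit V)) ` NT V W = {d. \<forall>k. k \<notin> sp_iso W V \<longrightarrow> d k = 0}"
  proof
    show "(\<lambda>\<eta>. \<eta> V (iso_unit V)) ` NT V W \<subseteq> {d. \<forall>k. k \<notin> sp_iso W V \<longrightarrow> d k = 0}"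
    proof (rule image_subsetI)
      fix \<eta>
      assume "\<eta> \<in> NT V W"
      then show "\<eta> V (iso_unit V) \<in> {d. \<forall>k. k \<notin> sp_iso W V \<longrightarrow> d k = 0}"
        using NT_iso_unit_support[OF assms] by blast
    qed
    show "{d. \<forall>k. k \<notin> sp_iso W V \<longrightarrow> d k = 0} \<subseteq> (\<lambda>\<eta>. \<eta> V (iso_unit V)) ` NT V W"
    proof
      fix d :: dual_elt
      assume "d \<in> {d. \<forall>k. k \<notin> sp_iso W V \<longrightarrow> d k = 0}"
      then have "d = nt_of V W d V (iso_unit V)"
        using nt_of_iso_unit[OF assms] by simp
      then show "d \<in> (\<lambda>\<eta>. \<eta> V (iso_unit V)) ` NT V W"
        by (rule image_eqI[OF _ nt_of_NT])
    qed
  qed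
qed

subsection \<open>Isometries as spans\<close>

definition graph_on :: "nat \<Rightarrow> (vec \<Rightarrow> vec) \<Rightarrow> (vec \<times> vec) set" where
  "graph_on n \<phi> = (\<lambda>v. (v, \<phi> v)) ` vecs n"

definition fun_of_graph :: "nat \<Rightarrow> (vec \<times> vec) set \<Rightarrow> vec \<Rightarrow> vec" where
  "fun_of_graph n k = (\<lambda>w. if w \<in> vecs n then (THE v. (w, v) \<in> k) else vzero)"

lemma qisosD:
  assumes "\<phi> \<in> qisos X Y"
  shows "bij_betw \<phi> (vecs (fst X)) (vecs (fst Y))" "lin_on (fst X) \<phi>"
    "\<And>x. x \<in> vecs (fst X) \<Longrightarrow> snd Y (\<phi> x) = snd X x"
    "\<And>x. x \<notin> vecs (fst X) \<Longrightarrow> \<phi> x = vzero"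
  using assms unfolding qisos_def by blast+

lemma mem_graph_on: "(v, w) \<in> graph_on n \<phi> \<longleftrightarrow> v \<in> vecs n \<and> w = \<phi> v"
  by (auto simp: graph_on_def)

lemma graph_on_sp_iso:
  assumes \<phi>: "\<phi> \<in> qisos X Y"
  shows "graph_on (fst X) \<phi> \<in> sp_iso X Y"
proof -
  note q = qisosD[OF \<phi>]
  have "graph_on (fst X) \<phi> \<in> sphom X Y"
  proof (rule sphomI)
    show "graph_on (fst X) \<phi> \<subseteq> vecs (fst X) \<times> vecs (fst Y)"
      using bij_betw_apply[OF q(1)] by (auto simp: graph_on_def)
    show "(vzero, vzero) \<in> graph_on (fst X) \<phi>"
      using lin_on_vzero[OF q(2)] by (simp add: mem_graph_on)
    show "(vadd a c, vadd b d) \<in> graph_on (fst X) \<phi>"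
      if "(a, b) \<in> graph_on (fst X) \<phi>" "(c, d) \<in> graph_on (fst X) \<phi>" for a b c d
      using that q(2) by (simp add: mem_graph_on lin_on_def)
    show "a = b" if "(a, c) \<in> graph_on (fst X) \<phi>" "(b, c) \<in> graph_on (fst X) \<phi>" for a b c
      using that bij_betw_imp_inj_on[OF q(1)] by (auto simp: mem_graph_on inj_on_def)
    show "b = c" if "(a, b) \<in> graph_on (fst X) \<phi>" "(a, c) \<in> graph_on (fst X) \<phi>" for a b c
      using that by (simp add: mem_graph_on)
    show "snd Y b = snd X a" if "(a, b) \<in> graph_on (fst X) \<phi>" for a b
      using that q(3) by (simp add: mem_graph_on)
  qed
  moreover have "Domain (graph_on (fst X) \<phi>) = vecs (fst X)"
    by (auto simp: graph_on_def)
  moreover have "Range (graph_on (fst X) \<phi>) = \<phi> ` vecs (fst X)"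
    by (auto simp: Range_iff mem_graph_on)
  moreover have "\<phi> ` vecs (fst X) = vecs (fst Y)"
    using bij_betw_imp_surj_on[OF q(1)] .
  ultimately show ?thesis
    by (simp add: sp_iso_def sp_emb_def)
qed

lemma fun_of_graph_qisos:
  assumes k: "k \<in> sp_iso X Y"
  shows "fun_of_graph (fst X) k \<in> qisos X Y" "graph_on (fst X) (fun_of_graph (fst X) k) = k"
proof -
  let ?f = "fun_of_graph (fst X) k"
  have ks: "k \<in> sphom X Y"
    using k by (simp add: sp_iso_def sp_emb_def)
  note s = sphomD[OF ks]
  have graph: "(w, v) \<in> k \<longleftrightarrow> w \<in> vecs (fst X) \<and> v = ?f w" for w v
  proof
    assume wv: "(w, v) \<in> k"
    then have "(THE v. (w, v) \<in> k) = v"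
      using s(4) by blast
    then show "w \<in> vecs (fst X) \<and> v = ?f w"
      using wv s(1) by (auto simp: fun_of_graph_def)
  next
    assume w: "w \<in> vecs (fst X) \<and> v = ?f w"
    then obtain v' where "(w, v') \<in> k"
      using k by (auto simp: sp_iso_def sp_emb_def)
    moreover from this have "(THE v. (w, v) \<in> k) = v'"
      using s(4) by blast
    ultimately show "(w, v) \<in> k"
      using w by (auto simp: fun_of_graph_def)
  qed
  then have on_graph: "x \<in> vecs (fst X) \<Longrightarrow> (x, ?f x) \<in> k" for x
    by simp
  show "graph_on (fst X) ?f = k"
  proof (rule set_eqI)
    fix p
    show "p \<in> graph_on (fst X) ?f \<longleftrightarrow> p \<in> k"
      by (cases p) (simp add: mem_graph_on graph)
  qed
  have "inj_on ?f (vecs (fst X))"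
  proof (rule inj_onI)
    fix x y
    assume "x \<in> vecs (fst X)" "y \<in> vecs (fst X)" "?f x = ?f y"
    then have "(x, ?f x) \<in> k" "(y, ?f x) \<in> k"
      using on_graph by metis+
    then show "x = y"
      using s(5) by blast
  qed
  moreover have "?f ` vecs (fst X) = vecs (fst Y)"
  proof
    show "?f ` vecs (fst X) \<subseteq> vecs (fst Y)"
      using on_graph s(1) by blast
    show "vecs (fst Y) \<subseteq> ?f ` vecs (fst X)"
    proof
      fix y
      assume "y \<in> vecs (fst Y)"
      then obtain x where "(x, y) \<in> k"
        using k by (auto simp: sp_iso_def)
      then show "y \<in> ?f ` vecs (fst X)"
        by (simp add: graph)
    qed
  qed
  moreover have "lin_on (fst X) ?f"
    unfolding lin_on_def
  proof (intro ballI)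
    fix x y
    assume "x \<in> vecs (fst X)" "y \<in> vecs (fst X)"
    then have "(vadd x y, vadd (?f x) (?f y)) \<in> k"
      using on_graph s(3) by blast
    then show "?f (vadd x y) = vadd (?f x) (?f y)"
      by (simp add: graph)
  qed
  moreover have "\<forall>x\<in>vecs (fst X). snd Y (?f x) = snd X x"
    using s(6)[OF on_graph] by blast
  moreover have "\<forall>x. x \<notin> vecs (fst X) \<longrightarrow> ?f x = vzero"
    by (simp add: fun_of_graph_def)
  ultimately show "?f \<in> qisos X Y"
    unfolding qisos_def bij_betw_def by blast
qed

lemma bij_betw_graph_on: "bij_betw (graph_on (fst X)) (qisos X Y) (sp_iso X Y)"
proof (rule bij_betw_byWitness[where f' = "fun_of_graph (fst X)"])
  show "\<forall>\<phi>\<in>qisos X Y. fun_of_graph (fst X) (graph_on (fst X) \<phi>) = \<phi>"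
  proof (intro ballI, rule ext)
    fix \<phi> x
    assume "\<phi> \<in> qisos X Y"
    then show "fun_of_graph (fst X) (graph_on (fst X) \<phi>) x = \<phi> x"
      using qisosD(4) by (auto simp: fun_of_graph_def mem_graph_on)
  qed
  show "\<forall>k\<in>sp_iso X Y. graph_on (fst X) (fun_of_graph (fst X) k) = k"
    using fun_of_graph_qisos(2) by blast
  show "graph_on (fst X) ` qisos X Y \<subseteq> sp_iso X Y"
    using graph_on_sp_iso by blast
  show "fun_of_graph (fst X) ` sp_iso X Y \<subseteq> qisos X Y"
    using fun_of_graph_qisos(1) by blast
qed

lemma qiso_iff_sp_iso: "qiso X Y \<longleftrightarrow> sp_iso X Y \<noteq> {}"
  unfolding qiso_def using bij_betw_graph_on[of X Y] by (metis bij_betw_def image_is_empty)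

lemma bij_betw_relcomp_sp_iso:
  assumes k: "k \<in> sp_iso X Y"
  shows "bij_betw (\<lambda>l. k O l) (sp_iso Y Z) (sp_iso X Z)"
proof (rule bij_betw_byWitness[where f' = "\<lambda>m. converse k O m"])
  show "\<forall>l\<in>sp_iso Y Z. converse k O (k O l) = l"
  proof
    fix l
    assume "l \<in> sp_iso Y Z"
    then show "converse k O (k O l) = l"
      using sp_iso_converse_relcomp[OF k] spid_relcomp[of l Y Z]
      by (simp add: sp_iso_def sp_emb_def flip: O_assoc)
  qed
  show "\<forall>m\<in>sp_iso X Z. k O (converse k O m) = m"
  proof
    fix m
    assume "m \<in> sp_iso X Z"
    then show "k O (converse k O m) = m"
      using sp_iso_relcomp_converse[OF k] spid_relcomp[of m X Z]
      by (simp add: sp_iso_def sp_emb_def flip: O_assoc)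
  qed
  show "(\<lambda>l. k O l) ` sp_iso Y Z \<subseteq> sp_iso X Z"
    using relcomp_sp_iso[OF k] by blast
  show "(\<lambda>m. converse k O m) ` sp_iso X Z \<subseteq> sp_iso Y Z"
    using relcomp_sp_iso[OF converse_sp_iso[OF k]] by blast
qed

lemma bij_betw_pullback_supported:
  assumes \<kappa>: "bij_betw \<kappa> A B"
  shows "bij_betw (\<lambda>d a. if a \<in> A then d (\<kappa> a) else 0)
           {d. \<forall>b. b \<notin> B \<longrightarrow> d b = 0} {c. \<forall>a. a \<notin> A \<longrightarrow> (c a :: 'c::zero) = 0}"
proof (rule bij_betw_byWitness[where f' = "\<lambda>c b. if b \<in> B then c (inv_into A \<kappa> b) else 0"])
  have inv: "inv_into A \<kappa> b \<in> A" "\<kappa> (inv_into A \<kappa> b) = b" if "b \<in> B" for b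
    using that bij_betw_apply[OF bij_betw_inv_into[OF \<kappa>]] bij_betw_inv_into_right[OF \<kappa>] by auto
  show "\<forall>d\<in>{d. \<forall>b. b \<notin> B \<longrightarrow> d b = 0}.
      (\<lambda>b. if b \<in> B then (if inv_into A \<kappa> b \<in> A then d (\<kappa> (inv_into A \<kappa> b)) else 0) else 0) = d"
    using inv by (auto intro!: ext)
  show "\<forall>c\<in>{c. \<forall>a. a \<notin> A \<longrightarrow> (c a :: 'c) = 0}.
      (\<lambda>a. if a \<in> A then (if \<kappa> a \<in> B then c (inv_into A \<kappa> (\<kappa> a)) else 0) else 0) = c"
    using bij_betw_apply[OF \<kappa>] bij_betw_inv_into_left[OF \<kappa>] by (auto intro!: ext)
qed auto

text \<open>The coordinates of \<open>\<eta>\<close> in \<open>\<bbbF>\<^sub>2[O(V)]\<close>, after identifying \<open>O(V)\<close> with the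
  isomorphisms \<open>W \<rightarrow> V\<close> via \<open>\<sigma> \<mapsto> \<sigma> \<circ> \<tau>\<close> (spans compose in diagrammatic order).\<close>

definition nt_coeffs :: "(vec \<Rightarrow> vec) \<Rightarrow> qspace \<Rightarrow> qspace \<Rightarrow> nat_trans \<Rightarrow> (vec \<Rightarrow> vec) \<Rightarrow> bit" where
  "nt_coeffs \<tau> V W \<eta> \<sigma> =
     (if \<sigma> \<in> orth V then \<eta> V (iso_unit V) (graph_on (fst W) \<tau> O graph_on (fst V) \<sigma>) else 0)"

lemma bij_betw_nt_coeffs:
  assumes "qobj V" and \<tau>: "\<tau> \<in> qisos W V"
  shows "bij_betw (nt_coeffs \<tau> V W) (NT V W) (group_alg V)"
proof -
  have "bij_betw (\<lambda>\<sigma>. graph_on (fst W) \<tau> O graph_on (fst V) \<sigma>) (orth V) (sp_iso W V)"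
    using bij_betw_trans[OF bij_betw_graph_on bij_betw_relcomp_sp_iso[OF graph_on_sp_iso[OF \<tau>]]]
    by (simp add: orth_def comp_def)
  from bij_betw_trans[OF bij_betw_NT_iso_unit[OF assms(1)] bij_betw_pullback_supported[OF this]]
  show ?thesis
    by (simp add: group_alg_def comp_def nt_coeffs_def[abs_def])
qed

lemma NT_eq_ntzero:
  assumes "qobj V" and "sp_iso W V = {}"
  shows "NT V W = {ntzero}"
proof -
  have "{d. \<forall>k. k \<notin> sp_iso W V \<longrightarrow> d k = 0} = {ntzero V (iso_unit V)}"
    using assms(2) by (auto simp: ntzero_def dzero_def)
  then have bij: "bij_betw (\<lambda>\<eta>. \<eta> V (iso_unit V)) (NT V W) {ntzero V (iso_unit V)}"
    using bij_betw_NT_iso_unit[OF assms(1), of W] by simp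
  have "\<eta> = ntzero" if "\<eta> \<in> NT V W" for \<eta>
    using bij_betw_inv_into_left[OF bij that] bij_betw_inv_into_left[OF bij ntzero_NT]
      bij_betw_apply[OF bij that] by simp
  then show ?thesis
    using ntzero_NT by blast
qed

theorem corollary4p33:
  assumes "qobj V" and "qobj W"
  shows "(qiso W V \<longrightarrow>
            (\<exists>\<Phi>. bij_betw \<Phi> (NT V W) (group_alg V) \<and>
                 (\<forall>\<eta>\<in>NT V W. \<forall>\<theta>\<in>NT V W. \<Phi> (ntadd \<eta> \<theta>) = (\<lambda>\<sigma>. \<Phi> \<eta> \<sigma> + \<Phi> \<theta> \<sigma>)) \<and>
                 (\<forall>c. \<forall>\<eta>\<in>NT V W. \<Phi> (ntsmult c \<eta>) = (\<lambda>\<sigma>. c * \<Phi> \<eta> \<sigma>))))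
       \<and> (\<not> qiso W V \<longrightarrow> NT V W = {ntzero})"
proof (intro conjI impI)
  assume "qiso W V"
  then obtain \<tau> where \<tau>: "\<tau> \<in> qisos W V"
    by (auto simp: qiso_def)
  show "\<exists>\<Phi>. bij_betw \<Phi> (NT V W) (group_alg V) \<and>
      (\<forall>\<eta>\<in>NT V W. \<forall>\<theta>\<in>NT V W. \<Phi> (ntadd \<eta> \<theta>) = (\<lambda>\<sigma>. \<Phi> \<eta> \<sigma> + \<Phi> \<theta> \<sigma>)) \<and>
      (\<forall>c. \<forall>\<eta>\<in>NT V W. \<Phi> (ntsmult c \<eta>) = (\<lambda>\<sigma>. c * \<Phi> \<eta> \<sigma>))"
    by (intro exI[of _ "nt_coeffs \<tau> V W"] conjI bij_betw_nt_coeffs[OF assms(1) \<tau>])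
      (auto simp: nt_coeffs_def ntadd_def dadd_def ntsmult_def)
next
  assume "\<not> qiso W V"
  then show "NT V W = {ntzero}"
    using NT_eq_ntzero[OF assms(1)] by (simp add: qiso_iff_sp_iso)
qed

end
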